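(* Let $l\ge 0$ be an integer and $v\in\{0,1\}$. Let $\mathcal{D}_{n}$ be the set of partitions into exactly $n$ distinct parts, and for $\pi=(\lambda_1,\lambda_2,\dots)$ let $\mathcal{O}(\pi)=\lambda_1+\lambda_3+\lambda_5+\cdots$. For integers $N\ge0$, $k\ge1$, $m\ge0$ let $\mathcal{P}_N(k,m)$ be the set of partitions $(\lambda_1,\dots,\lambda_N)$ into exactly $N$ parts with $\lambda_N\ge k$ and $\lambda_i-\lambda_{i+1}\ge m$ for $1\le i\le N-1$ ($\mathcal{P}_0(k,m)$ contains only the empty partition). For a partition $\pi=(\lambda_1,\dots,\lambda_N)$ with $N\ge1$ let \[\omega_{2,2}(\pi)=(\lambda_N-1)\prod_{i=1}^{N-1}(\lambda_i-\lambda_{i+1}-1),\qquad \tilde\omega_1(\pi)=\prod_{i=1}^{N-1}(\lambda_i-\lambda_{i+1}-1),\] and let $\omega_{2,2}$ of the empty partition be $1$. Then \[\sum_{\pi\in\mathcal{D}_{2l+v}}q^{\mathcal{O}(\pi)}=\sum_{\pi\in\mathcal{P}_{l+v}(2-v,2)}\big[(1-v)\,\omega_{2,2}(\pi)+v\,\tilde\omega_1(\pi)\big]q^{|\pi|}.\]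
   Context: A partition is a finite weakly decreasing sequence of positive integers; $|\pi|$ is the sum of its parts. *)

theory Defs
  imports "HOL-Computational_Algebra.Formal_Power_Series"
begin

text \<open>A partition is a finite weakly decreasing list of positive integers
  (lambda_1 >= lambda_2 >= ...); list index i corresponds to lambda_(i+1).\<close>
definition is_partition :: "nat list \<Rightarrow> bool" where
  "is_partition xs \<longleftrightarrow> sorted_wrt (\<ge>) xs \<and> (\<forall>x\<in>set xs. 0 < x)"

definition psize :: "nat list \<Rightarrow> nat" where
  "psize xs = sum_list xs"

definition Dpart :: "nat \<Rightarrow> nat list set" where
  "Dpart n = {xs. is_partition xs \<and> distinct xs \<and> length xs = n}"

text \<open>O(pi) = lambda_1 + lambda_3 + lambda_5 + ... (0-based even indices).\<close>
definition Osum :: "nat list \<Rightarrow> nat" where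
  "Osum xs = (\<Sum>i\<in>{i. i < length xs \<and> even i}. xs ! i)"

definition Ppart :: "nat \<Rightarrow> nat \<Rightarrow> nat \<Rightarrow> nat list set" where
  "Ppart N k m = {xs. is_partition xs \<and> length xs = N \<and>
      (N \<ge> 1 \<longrightarrow> last xs \<ge> k) \<and>
      (\<forall>i. i + 1 < N \<longrightarrow> xs ! i - xs ! (i + 1) \<ge> m)}"

definition omega1t :: "nat list \<Rightarrow> int" where
  "omega1t xs = (\<Prod>i<length xs - 1. int (xs ! i) - int (xs ! (i + 1)) - 1)"

definition omega22 :: "nat list \<Rightarrow> int" where
  "omega22 xs = (if xs = [] then 1 else (int (last xs) - 1) * omega1t xs)"

end

theory Submission
  imports Defs
begin

text \<open>Reading off the parts \<open>\<lambda>\<^sub>1, \<lambda>\<^sub>3, \<lambda>\<^sub>5, \<dots>\<close> of a partition \<open>\<pi>\<close> into \<open>2l + v\<close>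
  distinct parts gives a partition \<open>\<mu>\<close> into \<open>l + v\<close> parts with \<open>|\<mu>| = \<O>(\<pi>)\<close>,
  consecutive differences at least 2 (since \<open>\<lambda>\<^sub>1 > \<lambda>\<^sub>2 > \<lambda>\<^sub>3\<close>), and smallest part at
  least \<open>2 - v\<close> (for \<open>v = 0\<close> the part \<open>\<lambda>\<^sub>2\<^sub>l \<ge> 1\<close> lies below it).  Conversely \<open>\<pi>\<close> is
  recovered from \<open>\<mu>\<close> by choosing each \<open>\<lambda>\<^sub>2\<^sub>i\<close> strictly between \<open>\<mu>\<^sub>i\<close> and \<open>\<mu>\<^sub>i\<^sub>+\<^sub>1\<close>
  (and, for \<open>v = 0\<close>, \<open>\<lambda>\<^sub>2\<^sub>l\<close> strictly between \<open>0\<close> and \<open>\<mu>\<^sub>l\<close>), independently; so the fiber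
  over \<open>\<mu>\<close> has exactly \<open>\<omega>\<^sub>2\<^sub>,\<^sub>2(\<mu>)\<close> resp. \<open>\<omega>\<^sub>1(\<mu>)\<close> elements.\<close>

definition strict_partition :: "nat list \<Rightarrow> bool" where
  "strict_partition xs \<longleftrightarrow> sorted_wrt (>) xs \<and> (\<forall>x\<in>set xs. 0 < x)"

fun odd_parts :: "nat list \<Rightarrow> nat list" where
  "odd_parts [] = []"
| "odd_parts [x] = [x]"
| "odd_parts (x # y # xs) = x # odd_parts xs"

definition odd_parts_fiber :: "nat \<Rightarrow> nat list \<Rightarrow> nat list set" where
  "odd_parts_fiber v \<mu> =
     {\<pi>. strict_partition \<pi> \<and> length \<pi> = 2 * length \<mu> - v \<and> odd_parts \<pi> = \<mu>}"

lemma strict_partition_Cons: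
  "strict_partition (x # xs) \<longleftrightarrow> (\<forall>y\<in>set xs. y < x) \<and> 0 < x \<and> strict_partition xs"
  by (auto simp: strict_partition_def)

lemma sorted_wrt_ge_distinct_iff:
  "sorted_wrt (\<ge>) xs \<and> distinct xs \<longleftrightarrow> sorted_wrt (>) (xs :: 'a :: linorder list)"
  by (induction xs) (auto simp: le_less)

lemma Dpart_eq: "Dpart n = {\<pi>. strict_partition \<pi> \<and> length \<pi> = n}"
  using sorted_wrt_ge_distinct_iff
  by (auto simp: Dpart_def is_partition_def strict_partition_def)

lemma last_le_if_sorted_wrt_ge:
  assumes "sorted_wrt (\<ge>) xs" "x \<in> set xs"
  shows "last xs \<le> (x :: 'a :: linorder)"
  using assms by (induction xs) (auto intro: order_trans)

lemma Ppart_eq: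
  assumes "0 < k"
  shows "Ppart N k m =
    {\<mu>. sorted_wrt (\<lambda>x y. y + m \<le> x) \<mu> \<and> length \<mu> = N \<and> (\<mu> \<noteq> [] \<longrightarrow> k \<le> last \<mu>)}"
    (is "_ = {\<mu>. ?gapped \<mu> \<and> _}")
proof -
  have "transp (\<lambda>x y :: nat. y + m \<le> x)"
    by (auto intro: transpI)
  then have gaps: "?gapped \<mu> \<longleftrightarrow> (\<forall>i. i + 1 < length \<mu> \<longrightarrow> \<mu> ! (i + 1) + m \<le> \<mu> ! i)" for \<mu>
    by (simp add: sorted_wrt_iff_nth_Suc_transp)
  have gap_iff: "\<mu> ! i - \<mu> ! (i + 1) \<ge> m \<longleftrightarrow> \<mu> ! (i + 1) + m \<le> \<mu> ! i"
    if "sorted_wrt (\<ge>) \<mu>" "i + 1 < length \<mu>" for \<mu> :: "nat list" and i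
    using that sorted_wrt_nth_less[of "(\<ge>)" \<mu> i "i + 1"] by auto
  have partition: "is_partition \<mu>" if "?gapped \<mu>" "\<mu> \<noteq> [] \<longrightarrow> k \<le> last \<mu>" for \<mu>
  proof -
    have ge: "sorted_wrt (\<ge>) \<mu>"
      using that(1) by (rule sorted_wrt_mono_rel[rotated]) simp
    moreover have "0 < x" if "x \<in> set \<mu>" for x
      using last_le_if_sorted_wrt_ge[OF ge that] \<open>x \<in> set \<mu>\<close> \<open>\<mu> \<noteq> [] \<longrightarrow> k \<le> last \<mu>\<close> assms
      by auto
    ultimately show ?thesis
      by (simp add: is_partition_def)
  qed
  show ?thesis
    unfolding Ppart_def
  proof (intro Collect_cong iffI conjI)
    fix \<mu> assume \<mu>: "is_partition \<mu> \<and> length \<mu> = N \<and> (N \<ge> 1 \<longrightarrow> k \<le> last \<mu>) \<and>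
      (\<forall>i. i + 1 < N \<longrightarrow> m \<le> \<mu> ! i - \<mu> ! (i + 1))"
    then show "?gapped \<mu>"
      using gaps gap_iff by (auto simp: is_partition_def)
    show "length \<mu> = N" "\<mu> \<noteq> [] \<longrightarrow> k \<le> last \<mu>"
      using \<mu> by (auto simp: Suc_le_eq)
  next
    fix \<mu> assume \<mu>: "?gapped \<mu> \<and> length \<mu> = N \<and> (\<mu> \<noteq> [] \<longrightarrow> k \<le> last \<mu>)"
    then show "is_partition \<mu>"
      using partition by blast
    then show "\<forall>i. i + 1 < N \<longrightarrow> m \<le> \<mu> ! i - \<mu> ! (i + 1)"
      using \<mu> gaps gap_iff by (auto simp: is_partition_def)
    show "length \<mu> = N" "N \<ge> 1 \<longrightarrow> k \<le> last \<mu>"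
      using \<mu> by auto
  qed
qed

lemma odd_parts_Cons: "odd_parts (x # xs) = x # odd_parts (tl xs)"
  by (cases xs) auto

lemma odd_parts_eq_Nil_iff [simp]: "odd_parts xs = [] \<longleftrightarrow> xs = []"
  by (cases xs rule: odd_parts.cases) auto

lemma length_odd_parts: "length (odd_parts xs) = (length xs + 1) div 2"
  by (induction xs rule: odd_parts.induct) auto

lemma set_odd_parts_subset: "set (odd_parts xs) \<subseteq> set xs"
  by (induction xs rule: odd_parts.induct) auto

lemma Osum_eq_sum_lessThan: "Osum xs = (\<Sum>i<length xs. if even i then xs ! i else 0)"
proof -
  have "{i. i < length xs \<and> even i} = {..<length xs} \<inter> {i. even i}"
    by auto
  then show ?thesis
    by (simp add: Osum_def sum.inter_restrict)
qed

lemma Osum_Cons_Cons: "Osum (x # y # xs) = x + Osum xs"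
  unfolding Osum_eq_sum_lessThan
  by (simp add: sum.lessThan_Suc_shift del: sum.lessThan_Suc) (auto intro: sum.cong)

lemma Osum_eq_sum_list_odd_parts: "Osum xs = sum_list (odd_parts xs)"
proof (induction xs rule: odd_parts.induct)
  case (3 x y xs)
  then show ?case
    by (simp add: Osum_Cons_Cons)
qed (simp_all add: Osum_eq_sum_lessThan)

lemma sorted_wrt_gap2_odd_parts:
  "sorted_wrt (>) xs \<Longrightarrow> sorted_wrt (\<lambda>x y. y + 2 \<le> x) (odd_parts xs)"
proof (induction xs rule: odd_parts.induct)
  case (3 x y xs)
  have "z + 2 \<le> x" if "z \<in> set (odd_parts xs)" for z
    using 3(2) set_odd_parts_subset that by fastforce
  then show ?case
    using 3 by simp
qed simp_all

lemma last_lt_last_odd_parts: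
  "even (length xs) \<Longrightarrow> xs \<noteq> [] \<Longrightarrow> sorted_wrt (>) xs \<Longrightarrow> last xs < last (odd_parts xs)"
  by (induction xs rule: odd_parts.induct) auto

lemma odd_parts_in_Ppart:
  assumes "strict_partition \<pi>" "length \<pi> = 2 * l + v" "v \<le> 1"
  shows "odd_parts \<pi> \<in> Ppart (l + v) (2 - v) 2"
proof -
  have length: "length (odd_parts \<pi>) = l + v"
    using assms(2,3) by (auto simp: length_odd_parts)
  have "2 - v \<le> last (odd_parts \<pi>)" if "odd_parts \<pi> \<noteq> []"
  proof (cases "v = 0")
    case True
    then have "last \<pi> < last (odd_parts \<pi>)" "0 < last \<pi>"
      using that assms last_lt_last_odd_parts[of \<pi>] by (auto simp: strict_partition_def)
    then show ?thesis
      by simp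
  next
    case False
    have "last (odd_parts \<pi>) \<in> set \<pi>"
      using that set_odd_parts_subset by fastforce
    then show ?thesis
      using False assms(1) by (auto simp: strict_partition_def)
  qed
  moreover have "0 < 2 - v"
    using assms(3) by simp
  ultimately show ?thesis
    unfolding Ppart_eq[OF \<open>0 < 2 - v\<close>]
    using length assms(1) sorted_wrt_gap2_odd_parts by (simp add: strict_partition_def)
qed

lemma finite_odd_parts_fiber: "finite (odd_parts_fiber v \<mu>)"
proof (rule finite_subset)
  show "odd_parts_fiber v \<mu> \<subseteq> {\<pi>. set \<pi> \<subseteq> {..hd \<mu>} \<and> length \<pi> = 2 * length \<mu> - v}"
  proof
    fix \<pi> assume \<pi>: "\<pi> \<in> odd_parts_fiber v \<mu>"
    have "x \<le> hd \<mu>" if x: "x \<in> set \<pi>" for x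
    proof -
      obtain y ys where "\<pi> = y # ys"
        using x by (cases \<pi>) auto
      with \<pi> x show ?thesis
        by (auto simp: odd_parts_fiber_def strict_partition_def odd_parts_Cons)
    qed
    with \<pi> show "\<pi> \<in> {\<pi>. set \<pi> \<subseteq> {..hd \<mu>} \<and> length \<pi> = 2 * length \<mu> - v}"
      by (auto simp: odd_parts_fiber_def)
  qed
qed (simp add: finite_lists_length_eq)

lemma odd_parts_fiber_Cons_Cons:
  assumes "v \<le> 1"
  shows "odd_parts_fiber v (a # c # \<mu>) =
    (\<lambda>(b, \<pi>). a # b # \<pi>) ` ({c<..<a} \<times> odd_parts_fiber v (c # \<mu>))"
proof (intro equalityI subsetI)
  fix \<pi> assume \<pi>: "\<pi> \<in> odd_parts_fiber v (a # c # \<mu>)"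
  then obtain b \<rho> where \<pi>_eq: "\<pi> = a # b # \<rho>" and \<rho>: "odd_parts \<rho> = c # \<mu>"
    using assms by (cases \<pi> rule: odd_parts.cases) (auto simp: odd_parts_fiber_def)
  then obtain \<sigma> where "\<rho> = c # \<sigma>"
    by (cases \<rho>) (auto simp: odd_parts_Cons)
  with \<pi> \<pi>_eq \<rho> assms have "b \<in> {c<..<a}" "\<rho> \<in> odd_parts_fiber v (c # \<mu>)"
    by (auto simp: odd_parts_fiber_def strict_partition_Cons)
  with \<pi>_eq show "\<pi> \<in> (\<lambda>(b, \<pi>). a # b # \<pi>) ` ({c<..<a} \<times> odd_parts_fiber v (c # \<mu>))"
    by force
next
  fix \<pi> assume "\<pi> \<in> (\<lambda>(b, \<pi>). a # b # \<pi>) ` ({c<..<a} \<times> odd_parts_fiber v (c # \<mu>))"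
  then obtain b \<rho> where \<pi>_eq: "\<pi> = a # b # \<rho>" and b: "c < b" "b < a"
    and \<rho>: "\<rho> \<in> odd_parts_fiber v (c # \<mu>)"
    by auto
  then obtain \<sigma> where "\<rho> = c # \<sigma>"
    by (cases \<rho>) (auto simp: odd_parts_fiber_def odd_parts_Cons)
  with \<rho> have "\<forall>x\<in>set \<rho>. x \<le> c"
    by (auto simp: odd_parts_fiber_def strict_partition_def)
  with \<pi>_eq b \<rho> assms show "\<pi> \<in> odd_parts_fiber v (a # c # \<mu>)"
    by (auto simp: odd_parts_fiber_def strict_partition_Cons)
qed

lemma card_odd_parts_fiber_Cons_Cons:
  "v \<le> 1 \<Longrightarrow> card (odd_parts_fiber v (a # c # \<mu>)) = (a - c - 1) * card (odd_parts_fiber v (c # \<mu>))"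
  by (simp add: odd_parts_fiber_Cons_Cons card_image inj_on_def card_cartesian_product)

lemma odd_parts_fiber_1_single: "0 < a \<Longrightarrow> odd_parts_fiber 1 [a] = {[a]}"
  by (auto simp: odd_parts_fiber_def strict_partition_def length_Suc_conv)

lemma odd_parts_fiber_0_single: "odd_parts_fiber 0 [a] = (\<lambda>b. [a, b]) ` {0<..<a}"
  by (auto simp: odd_parts_fiber_def strict_partition_def length_Suc_conv numeral_2_eq_2)

lemma odd_parts_fiber_0_Nil: "odd_parts_fiber 0 [] = {[]}"
  by (auto simp: odd_parts_fiber_def strict_partition_def)

lemma omega1t_Cons_Cons: "omega1t (a # c # \<mu>) = (int a - int c - 1) * omega1t (c # \<mu>)"
  by (simp add: omega1t_def prod.lessThan_Suc_shift del: prod.lessThan_Suc)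

lemma card_odd_parts_fiber_1:
  "strict_partition \<mu> \<Longrightarrow> \<mu> \<noteq> [] \<Longrightarrow> int (card (odd_parts_fiber 1 \<mu>)) = omega1t \<mu>"
proof (induction \<mu> rule: induct_list012)
  case (2 a)
  then show ?case
    using odd_parts_fiber_1_single[of a] by (simp add: strict_partition_def omega1t_def)
next
  case (3 a c \<mu>)
  then show ?case
    by (simp add: card_odd_parts_fiber_Cons_Cons omega1t_Cons_Cons strict_partition_Cons of_nat_diff)
qed simp

lemma card_odd_parts_fiber_0:
  "strict_partition \<mu> \<Longrightarrow> int (card (odd_parts_fiber 0 \<mu>)) = omega22 \<mu>"
proof (induction \<mu> rule: induct_list012)
  case 1
  then show ?case
    by (simp add: odd_parts_fiber_0_Nil omega22_def)
next
  case (2 a)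
  then show ?case
    by (simp add: odd_parts_fiber_0_single strict_partition_def omega22_def omega1t_def
        card_image inj_on_def of_nat_diff)
next
  case (3 a c \<mu>)
  then show ?case
    by (simp add: card_odd_parts_fiber_Cons_Cons omega22_def omega1t_Cons_Cons strict_partition_Cons
        of_nat_diff)
qed

lemma strict_partition_if_Ppart:
  assumes "\<mu> \<in> Ppart N k 2" "0 < k"
  shows "strict_partition \<mu>"
proof -
  have "sorted_wrt (\<lambda>x y. y + 2 \<le> x) \<mu>"
    using assms by (simp add: Ppart_eq)
  then have "sorted_wrt (>) \<mu>"
    by (rule sorted_wrt_mono_rel[rotated]) simp
  moreover have "is_partition \<mu>"
    using assms(1) by (simp add: Ppart_def)
  ultimately show ?thesis
    by (simp add: strict_partition_def is_partition_def)
qed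

lemma card_odd_parts_fiber:
  assumes "v \<le> 1" "\<mu> \<in> Ppart (l + v) (2 - v) 2"
  shows "int (card (odd_parts_fiber v \<mu>)) = (1 - int v) * omega22 \<mu> + int v * omega1t \<mu>"
proof -
  have \<mu>: "strict_partition \<mu>"
    using assms by (intro strict_partition_if_Ppart[of _ "l + v" "2 - v"]) auto
  show ?thesis
  proof (cases "v = 0")
    case True
    then show ?thesis
      using card_odd_parts_fiber_0[OF \<mu>] by simp
  next
    case False
    then have "v = 1" "\<mu> \<noteq> []"
      using assms by (auto simp: Ppart_def)
    then show ?thesis
      using card_odd_parts_fiber_1[OF \<mu>] by simp
  qed
qed

lemma finite_Ppart_psize: "finite {\<mu> \<in> Ppart N k m. psize \<mu> = n}"
proof (rule finite_subset)
  show "{\<mu> \<in> Ppart N k m. psize \<mu> = n} \<subseteq> {\<mu>. set \<mu> \<subseteq> {..n} \<and> length \<mu> = N}"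
    using member_le_sum_list by (fastforce simp: Ppart_def psize_def)
qed (simp add: finite_lists_length_eq)

lemma Dpart_Osum_eq_UN_odd_parts_fiber:
  assumes "v \<le> 1"
  shows "{\<pi> \<in> Dpart (2 * l + v). Osum \<pi> = n} =
    (\<Union>\<mu>\<in>{\<mu> \<in> Ppart (l + v) (2 - v) 2. psize \<mu> = n}. odd_parts_fiber v \<mu>)"
proof (intro equalityI subsetI)
  fix \<pi> assume "\<pi> \<in> {\<pi> \<in> Dpart (2 * l + v). Osum \<pi> = n}"
  then have \<pi>: "strict_partition \<pi>" "length \<pi> = 2 * l + v" "sum_list (odd_parts \<pi>) = n"
    by (auto simp: Dpart_eq Osum_eq_sum_list_odd_parts)
  then have "odd_parts \<pi> \<in> {\<mu> \<in> Ppart (l + v) (2 - v) 2. psize \<mu> = n}"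
    using odd_parts_in_Ppart assms by (simp add: psize_def)
  moreover have "length (odd_parts \<pi>) = l + v"
    using \<pi>(2) assms by (auto simp: length_odd_parts)
  then have "\<pi> \<in> odd_parts_fiber v (odd_parts \<pi>)"
    using \<pi> by (simp add: odd_parts_fiber_def)
  ultimately show "\<pi> \<in> (\<Union>\<mu>\<in>{\<mu> \<in> Ppart (l + v) (2 - v) 2. psize \<mu> = n}. odd_parts_fiber v \<mu>)"
    by blast
next
  fix \<pi> assume "\<pi> \<in> (\<Union>\<mu>\<in>{\<mu> \<in> Ppart (l + v) (2 - v) 2. psize \<mu> = n}. odd_parts_fiber v \<mu>)"
  then show "\<pi> \<in> {\<pi> \<in> Dpart (2 * l + v). Osum \<pi> = n}"
    by (auto simp: odd_parts_fiber_def Ppart_def Dpart_eq Osum_eq_sum_list_odd_parts psize_def)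
qed

theorem theorem9:
  fixes l v :: nat
  assumes "v \<in> {0, 1}"
  shows "Abs_fps (\<lambda>n. int (card {\<pi> \<in> Dpart (2 * l + v). Osum \<pi> = n}))
       = Abs_fps (\<lambda>n. \<Sum>\<pi> \<in> {\<pi> \<in> Ppart (l + v) (2 - v) 2. psize \<pi> = n}.
            (1 - int v) * omega22 \<pi> + int v * omega1t \<pi>)"
proof -
  have v: "v \<le> 1"
    using assms by auto
  have "int (card {\<pi> \<in> Dpart (2 * l + v). Osum \<pi> = n}) =
      (\<Sum>\<mu> \<in> {\<mu> \<in> Ppart (l + v) (2 - v) 2. psize \<mu> = n}. (1 - int v) * omega22 \<mu> + int v * omega1t \<mu>)"
    for n
  proof -
    let ?B = "{\<mu> \<in> Ppart (l + v) (2 - v) 2. psize \<mu> = n}"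
    have "card {\<pi> \<in> Dpart (2 * l + v). Osum \<pi> = n} = (\<Sum>\<mu>\<in>?B. card (odd_parts_fiber v \<mu>))"
      unfolding Dpart_Osum_eq_UN_odd_parts_fiber[OF v]
      by (intro card_UN_disjoint finite_Ppart_psize ballI finite_odd_parts_fiber)
        (auto simp: odd_parts_fiber_def)
    then have "int (card {\<pi> \<in> Dpart (2 * l + v). Osum \<pi> = n}) =
        (\<Sum>\<mu>\<in>?B. int (card (odd_parts_fiber v \<mu>)))"
      by simp
    also have "\<dots> = (\<Sum>\<mu>\<in>?B. (1 - int v) * omega22 \<mu> + int v * omega1t \<mu>)"
      by (rule sum.cong) (auto simp: card_odd_parts_fiber[OF v])
    finally show ?thesis .
  qed
  then show ?thesis
    by simp
qed

end
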